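(* Let $\Omega$ be a Polish space admitting a nonzero atomless finite positive Borel measure (e.g. $\Omega=\mathbb{R}$). Then $\mathscr{L}(\mathscr{M}(\Omega),\sigma)$ is not an ideal of $\mathscr{L}(\mathscr{M}(\Omega))$: for every positive measure $\mu\ne0$ there is an operator $T\in\mathscr{L}(\mathscr{M}(\Omega))$ with $0\le T\le \mathbb{1}\otimes\mu$ (where $(\mathbb{1}\otimes\mu)\nu=\nu(\Omega)\mu$ is weakly continuous) such that $T$ is not weakly continuous.
   Context: $\mathscr{M}(\Omega)$ is the Banach lattice of finite signed Borel measures; $\mathscr{L}(\mathscr{M}(\Omega))$ the bounded operators on it with the order $S\le T$ iff $S\mu\le T\mu$ for positive $\mu$. An operator is weakly continuous if $(T\nu)(A)=\int k(x,A)\,d\nu(x)$ for a bounded transition kernel $k$ (a map $\Omega\times\mathscr{B}(\Omega)\to\mathbb{R}$, signed measure in the second variable, measurable in the first, with $\sup_x\lvert k\rvert(x,\Omega)<\infty$); equivalently, its norm adjoint leaves the space $B_b(\Omega)$ of bounded Borel functions invariant. $\mathscr{L}(\mathscr{M}(\Omega),\sigma)$ is the space of weakly continuous operators. *)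

theory Defs
  imports "HOL-Analysis.Analysis"
begin

text \<open>Finite signed Borel measures on \<Omega> (a type of class polish_space) are represented as
  real-valued set functions that vanish on non-Borel sets, vanish on the empty set and are
  countably additive on the Borel sets.\<close>

definition signed_measure :: "('a::topological_space set \<Rightarrow> real) \<Rightarrow> bool" where
  "signed_measure \<nu> \<longleftrightarrow>
     (\<forall>A. A \<notin> sets borel \<longrightarrow> \<nu> A = 0) \<and> \<nu> {} = 0 \<and>
     (\<forall>A::nat \<Rightarrow> 'a set. range A \<subseteq> sets borel \<longrightarrow> disjoint_family A \<longrightarrow>
        (\<lambda>n. \<nu> (A n)) sums \<nu> (\<Union>n. A n))"

definition positive_sm :: "('a::topological_space set \<Rightarrow> real) \<Rightarrow> bool" where
  "positive_sm \<nu> \<longleftrightarrow> signed_measure \<nu> \<and> (\<forall>A. \<nu> A \<ge> 0)"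

definition tv_norm :: "('a::topological_space set \<Rightarrow> real) \<Rightarrow> real" where
  "tv_norm \<nu> = (SUP P \<in> {P. finite P \<and> P \<subseteq> sets borel \<and> disjoint P}. \<Sum>A\<in>P. \<bar>\<nu> A\<bar>)"

definition pos_var :: "('a::topological_space set \<Rightarrow> real) \<Rightarrow> 'a set \<Rightarrow> real" where
  "pos_var \<nu> A = (SUP B \<in> {B. B \<in> sets borel \<and> B \<subseteq> A}. \<nu> B)"

definition pos_meas :: "('a::topological_space set \<Rightarrow> real) \<Rightarrow> 'a measure" where
  "pos_meas \<nu> = measure_of UNIV (sets borel) (\<lambda>A. ennreal (pos_var \<nu> A))"

definition neg_meas :: "('a::topological_space set \<Rightarrow> real) \<Rightarrow> 'a measure" where
  "neg_meas \<nu> = pos_meas (\<lambda>A. - \<nu> A)"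

definition sm_integral :: "('a::topological_space set \<Rightarrow> real) \<Rightarrow> ('a \<Rightarrow> real) \<Rightarrow> real" where
  "sm_integral \<nu> f = (\<integral>x. f x \<partial>pos_meas \<nu>) - (\<integral>x. f x \<partial>neg_meas \<nu>)"

definition bounded_op ::
  "(('a::topological_space set \<Rightarrow> real) \<Rightarrow> ('a set \<Rightarrow> real)) \<Rightarrow> bool" where
  "bounded_op T \<longleftrightarrow>
     (\<forall>\<nu>. signed_measure \<nu> \<longrightarrow> signed_measure (T \<nu>)) \<and>
     (\<forall>\<nu> \<eta> a b. signed_measure \<nu> \<longrightarrow> signed_measure \<eta> \<longrightarrow>
        T (\<lambda>A. a * \<nu> A + b * \<eta> A) = (\<lambda>A. a * T \<nu> A + b * T \<eta> A)) \<and>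
     (\<exists>C. \<forall>\<nu>. signed_measure \<nu> \<longrightarrow> tv_norm (T \<nu>) \<le> C * tv_norm \<nu>)"

definition bounded_kernel :: "('a::topological_space \<Rightarrow> 'a set \<Rightarrow> real) \<Rightarrow> bool" where
  "bounded_kernel k \<longleftrightarrow>
     (\<forall>x. signed_measure (k x)) \<and>
     (\<forall>A \<in> sets borel. (\<lambda>x. k x A) \<in> borel_measurable borel) \<and>
     (\<exists>C. \<forall>x. tv_norm (k x) \<le> C)"

definition weakly_continuous ::
  "(('a::topological_space set \<Rightarrow> real) \<Rightarrow> ('a set \<Rightarrow> real)) \<Rightarrow> bool" where
  "weakly_continuous T \<longleftrightarrow> bounded_op T \<and>
     (\<exists>k. bounded_kernel k \<and>
        (\<forall>\<nu>. signed_measure \<nu> \<longrightarrow>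
           (\<forall>A \<in> sets borel. T \<nu> A = sm_integral \<nu> (\<lambda>x. k x A))))"

definition one_tensor :: "('a set \<Rightarrow> real) \<Rightarrow> ('a set \<Rightarrow> real) \<Rightarrow> ('a set \<Rightarrow> real)" where
  "one_tensor \<mu> \<nu> = (\<lambda>A. \<nu> UNIV * \<mu> A)"

definition op_le ::
  "(('a::topological_space set \<Rightarrow> real) \<Rightarrow> ('a set \<Rightarrow> real)) \<Rightarrow> (('a set \<Rightarrow> real) \<Rightarrow> ('a set \<Rightarrow> real)) \<Rightarrow> bool" where
  "op_le S T \<longleftrightarrow> (\<forall>\<nu>. positive_sm \<nu> \<longrightarrow> (\<forall>A. S \<nu> A \<le> T \<nu> A))"

definition atomless_sm :: "('a::topological_space set \<Rightarrow> real) \<Rightarrow> bool" where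
  "atomless_sm m \<longleftrightarrow> \<not> (\<exists>A \<in> sets borel. m A > 0 \<and>
       (\<forall>B \<in> sets borel. B \<subseteq> A \<longrightarrow> m B = 0 \<or> m B = m A))"

end

theory Submission
  imports Defs "HOL-Probability.Probability"
begin

text \<open>The operator \<open>T \<nu> = \<nu>\<^sub>c(\<Omega>) \<mu>\<close>, where \<open>\<nu>\<^sub>c(\<Omega>) = \<nu>(\<Omega>) - \<Sum>\<^sub>x \<nu>{x}\<close> is the total
  mass of the diffuse part of \<open>\<nu>\<close>, is bounded and squeezed between \<open>0\<close> and \<open>\<one> \<otimes> \<mu>\<close>. It
  annihilates every Dirac measure. A kernel \<open>k\<close> representing \<open>T\<close> would satisfy
  \<open>k(x, A) = (T \<delta>\<^sub>x)(A) = 0\<close>, so \<open>T\<close> would vanish on all measures; but on the atomless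
  measure \<open>m\<close> it gives \<open>m(\<Omega>) \<mu> \<noteq> 0\<close>.\<close>

lemma signed_measure_nonborel: "signed_measure \<nu> \<Longrightarrow> A \<notin> sets borel \<Longrightarrow> \<nu> A = 0"
  by (simp add: signed_measure_def)

lemma signed_measure_empty: "signed_measure \<nu> \<Longrightarrow> \<nu> {} = 0"
  by (simp add: signed_measure_def)

lemma signed_measure_sums:
  "signed_measure \<nu> \<Longrightarrow> range A \<subseteq> sets borel \<Longrightarrow> disjoint_family A \<Longrightarrow>
   (\<lambda>n. \<nu> (A n)) sums \<nu> (\<Union>n. A n)"
  by (simp add: signed_measure_def)

lemma signed_measure_Un:
  assumes "signed_measure \<nu>" "A \<in> sets borel" "B \<in> sets borel" "A \<inter> B = {}"
  shows "\<nu> (A \<union> B) = \<nu> A + \<nu> B"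
proof -
  define F where "F = (\<lambda>n::nat. if n = 0 then A else if n = 1 then B else {})"
  have "range F \<subseteq> sets borel" "disjoint_family F"
    using assms unfolding disjoint_family_on_def F_def by auto
  moreover have "(\<Union>n. F n) = A \<union> B"
    by (auto simp: F_def split: if_splits)
  ultimately have "(\<lambda>n. \<nu> (F n)) sums \<nu> (A \<union> B)"
    using signed_measure_sums[OF assms(1)] by metis
  moreover have "(\<lambda>n. \<nu> (F n)) sums (\<Sum>n\<in>{0,1}. \<nu> (F n))"
    by (rule sums_finite) (auto simp: F_def signed_measure_empty[OF assms(1)])
  ultimately show ?thesis
    by (simp add: F_def sums_unique2)
qed

lemma signed_measure_Diff:
  assumes "signed_measure \<nu>" "A \<in> sets borel" "B \<in> sets borel" "A \<subseteq> B"
  shows "\<nu> (B - A) = \<nu> B - \<nu> A"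
  using signed_measure_Un[OF assms(1,2), of "B - A"] assms Un_Diff_cancel2[of A B]
  by (auto simp: Un_absorb1)

lemma signed_measure_Int_Diff:
  assumes "signed_measure \<nu>" "A \<in> sets borel" "B \<in> sets borel"
  shows "\<nu> A = \<nu> (A \<inter> B) + \<nu> (A - B)"
  using signed_measure_Un[OF assms(1), of "A \<inter> B" "A - B"] assms Int_Diff_Un[of A B] by auto

lemma signed_measure_finite_Union:
  assumes "signed_measure \<nu>" "finite P" "P \<subseteq> sets borel" "disjoint P"
  shows "(\<Sum>A\<in>P. \<nu> A) = \<nu> (\<Union>P)"
  using assms(2,3,4)
proof (induction P rule: finite_induct)
  case empty
  then show ?case by (simp add: signed_measure_empty[OF assms(1)])
next
  case (insert A P)
  have "A \<inter> \<Union>P = {}" using insert.prems(2) insert.hyps(2)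
    by (auto simp: pairwise_insert disjnt_def)
  moreover have "\<Union>P \<in> sets borel" using insert by (auto intro: sets.finite_Union)
  ultimately have "\<nu> (\<Union>(insert A P)) = \<nu> A + \<nu> (\<Union>P)"
    using signed_measure_Un[OF assms(1), of A "\<Union>P"] insert.prems by auto
  then show ?case using insert by (simp add: pairwise_insert)
qed

lemma finite_in_borel: "finite (F::'a::t1_space set) \<Longrightarrow> F \<in> sets borel"
  by (simp add: borel_closed finite_imp_closed)

lemma signed_measure_sum_singletons:
  assumes "signed_measure \<nu>" "finite (F::'a::t1_space set)"
  shows "(\<Sum>x\<in>F. \<nu> {x}) = \<nu> F"
proof -
  have "(\<lambda>x. {x}) ` F \<subseteq> sets borel" "disjoint ((\<lambda>x. {x}) ` F)"
    by (auto simp: finite_in_borel pairwise_def disjnt_def)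
  then show ?thesis
    using signed_measure_finite_Union[OF assms(1), of "(\<lambda>x. {x}) ` F"] assms(2)
    by (simp add: sum.reindex)
qed

lemma signed_measure_cmult: "signed_measure \<nu> \<Longrightarrow> signed_measure (\<lambda>A. c * \<nu> A)"
  unfolding signed_measure_def by (auto intro: sums_mult)

lemma signed_measure_uminus: "signed_measure \<nu> \<Longrightarrow> signed_measure (\<lambda>A. - \<nu> A)"
  using signed_measure_cmult[of \<nu> "-1"] by simp

lemma positive_sm_mono:
  assumes "positive_sm \<mu>" "A \<subseteq> B" "B \<in> sets borel"
  shows "\<mu> A \<le> \<mu> B"
proof (cases "A \<in> sets borel")
  case True
  then show ?thesis
    using signed_measure_Diff[of \<mu> A B] assms unfolding positive_sm_def
    by (metis diff_ge_0_iff_ge)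
next
  case False
  then show ?thesis using assms by (simp add: positive_sm_def signed_measure_def)
qed

lemma positive_sm_le_UNIV: "positive_sm \<mu> \<Longrightarrow> \<mu> A \<le> \<mu> UNIV"
  using positive_sm_mono[of \<mu> A UNIV] by simp


definition unbounded_on :: "('a::topological_space set \<Rightarrow> real) \<Rightarrow> 'a set \<Rightarrow> bool" where
  "unbounded_on \<nu> B \<longleftrightarrow>
     B \<in> sets borel \<and> \<not> bdd_above ((\<lambda>D. \<bar>\<nu> D\<bar>) ` {D. D \<in> sets borel \<and> D \<subseteq> B})"

text \<open>If \<open>\<nu>\<close> is unbounded on \<open>B\<close>, pick \<open>D \<subseteq> B\<close> with \<open>|\<nu> D| > |\<nu> B| + 1\<close>; then both \<open>D\<close> and
  \<open>B - D\<close> have mass at least \<open>1\<close>, and \<open>\<nu>\<close> stays unbounded on one of them.\<close>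

lemma unbounded_on_split:
  assumes sm: "signed_measure \<nu>" and "unbounded_on \<nu> B"
  shows "\<exists>C. C \<in> sets borel \<and> C \<subseteq> B \<and> 1 \<le> \<bar>\<nu> C\<bar> \<and> unbounded_on \<nu> (B - C)"
proof -
  let ?S = "\<lambda>B. (\<lambda>D. \<bar>\<nu> D\<bar>) ` {D. D \<in> sets borel \<and> D \<subseteq> B}"
  have B: "B \<in> sets borel" "\<not> bdd_above (?S B)" using assms(2) by (auto simp: unbounded_on_def)
  then obtain D where D: "D \<in> sets borel" "D \<subseteq> B" "\<bar>\<nu> D\<bar> > \<bar>\<nu> B\<bar> + 1"
    unfolding bdd_above_def by (force simp: not_le)
  have BD: "B - D \<in> sets borel" using D B by auto
  have "\<nu> (B - D) = \<nu> B - \<nu> D" using signed_measure_Diff[OF sm D(1) B(1) D(2)] .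
  then have BD1: "1 \<le> \<bar>\<nu> (B - D)\<bar>" "1 \<le> \<bar>\<nu> D\<bar>" using D(3) by linarith+
  show ?thesis
  proof (cases "unbounded_on \<nu> D")
    case True
    have "B - (B - D) = D" using D(2) by auto
    then show ?thesis using True BD BD1 by (intro exI[of _ "B - D"]) auto
  next
    case False
    then obtain K1 where K1: "\<And>x. x \<in> ?S D \<Longrightarrow> x \<le> K1"
      using D(1) unfolding unbounded_on_def bdd_above_def by auto
    have "unbounded_on \<nu> (B - D)"
    proof (rule ccontr)
      assume "\<not> unbounded_on \<nu> (B - D)"
      then obtain K2 where K2: "\<And>x. x \<in> ?S (B - D) \<Longrightarrow> x \<le> K2"
        using BD unfolding unbounded_on_def bdd_above_def by auto
      have "bdd_above (?S B)"
      proof (rule bdd_aboveI)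
        fix x assume "x \<in> ?S B"
        then obtain E where E: "E \<in> sets borel" "E \<subseteq> B" "x = \<bar>\<nu> E\<bar>" by auto
        have "\<bar>\<nu> (E \<inter> D)\<bar> \<le> K1" "\<bar>\<nu> (E - D)\<bar> \<le> K2"
          using K1[of "\<bar>\<nu> (E \<inter> D)\<bar>"] K2[of "\<bar>\<nu> (E - D)\<bar>"] E D by auto
        then show "x \<le> K1 + K2"
          using signed_measure_Int_Diff[OF sm E(1) D(1)] E(3) by linarith
      qed
      then show False using B by simp
    qed
    then show ?thesis using D BD1 by auto
  qed
qed

text \<open>Iterating the splitting would produce disjoint Borel sets \<open>E\<^sub>n\<close> with \<open>|\<nu> E\<^sub>n| \<ge> 1\<close>,
  contradicting the convergence of \<open>\<Sum>\<^sub>n \<nu> E\<^sub>n\<close>.\<close>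

lemma not_unbounded_on_UNIV:
  assumes sm: "signed_measure \<nu>"
  shows "\<not> unbounded_on \<nu> UNIV"
proof
  assume unb: "unbounded_on \<nu> UNIV"
  define nxt where "nxt B = (SOME C. C \<in> sets borel \<and> C \<subseteq> B \<and> 1 \<le> \<bar>\<nu> C\<bar> \<and> unbounded_on \<nu> (B - C))" for B
  have nxt: "nxt B \<in> sets borel \<and> nxt B \<subseteq> B \<and> 1 \<le> \<bar>\<nu> (nxt B)\<bar> \<and> unbounded_on \<nu> (B - nxt B)"
    if "unbounded_on \<nu> B" for B
    unfolding nxt_def by (rule someI_ex[OF unbounded_on_split[OF sm that]])
  define Bs where "Bs n = rec_nat UNIV (\<lambda>_ B. B - nxt B) n" for n
  have Bs0: "Bs 0 = UNIV" and BsS: "Bs (Suc n) = Bs n - nxt (Bs n)" for n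
    by (simp_all add: Bs_def)
  have unb_Bs: "unbounded_on \<nu> (Bs n)" for n
    by (induction n) (use unb nxt in \<open>auto simp: Bs0 BsS\<close>)
  define E where "E n = nxt (Bs n)" for n
  have E: "E n \<in> sets borel" "E n \<subseteq> Bs n" "1 \<le> \<bar>\<nu> (E n)\<bar>" for n
    using nxt[OF unb_Bs[of n]] by (auto simp: E_def)
  have "decseq Bs" by (rule decseq_SucI) (auto simp: BsS)
  then have "E m \<inter> E n = {}" if "m < n" for m n
    using E(2)[of n] decseqD[of Bs "Suc m" n] that by (auto simp: BsS E_def)
  then have "disjoint_family E"
    unfolding disjoint_family_on_def by (metis inf_commute linorder_neqE_nat)
  then have "(\<lambda>n. \<nu> (E n)) sums \<nu> (\<Union>n. E n)" using signed_measure_sums[OF sm] E(1) by auto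
  then have "(\<lambda>n. \<nu> (E n)) \<longlonglongrightarrow> 0" using summable_LIMSEQ_zero sums_summable by blast
  then obtain N where "\<bar>\<nu> (E N)\<bar> < 1" using LIMSEQ_D[of "\<lambda>n. \<nu> (E n)" 0 1] by auto
  then show False using E(3)[of N] by simp
qed

lemma signed_measure_bounded:
  assumes sm: "signed_measure \<nu>"
  obtains M where "\<And>A. \<bar>\<nu> A\<bar> \<le> M"
proof -
  obtain M where M: "\<And>D. D \<in> sets borel \<Longrightarrow> \<bar>\<nu> D\<bar> \<le> M"
    using not_unbounded_on_UNIV[OF sm] unfolding unbounded_on_def bdd_above_def by auto
  have "\<bar>\<nu> A\<bar> \<le> M" for A
    using M[of A] M[of "{}"] signed_measure_nonborel[OF sm] signed_measure_empty[OF sm]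
    by (cases "A \<in> sets borel") auto
  then show ?thesis using that by blast
qed


definition borel_partitions :: "'a::topological_space set set set" where
  "borel_partitions = {P. finite P \<and> P \<subseteq> sets borel \<and> disjoint P}"

lemma tv_norm_borel_partitions: "tv_norm \<nu> = (SUP P \<in> borel_partitions. \<Sum>A\<in>P. \<bar>\<nu> A\<bar>)"
  by (simp add: tv_norm_def borel_partitions_def)

text \<open>Split a partition into the cells of nonnegative and of negative mass: the sum is
  \<open>\<nu>(\<Union>P\<^sup>+) - \<nu>(\<Union>P\<^sup>-) \<le> 2M\<close>.\<close>

lemma bdd_above_partition_sums:
  assumes sm: "signed_measure \<nu>"
  shows "bdd_above ((\<lambda>P. \<Sum>A\<in>P. \<bar>\<nu> A\<bar>) ` borel_partitions)"
proof -
  obtain M where M: "\<And>A. \<bar>\<nu> A\<bar> \<le> M" using signed_measure_bounded[OF sm] by blast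
  have "(\<Sum>A\<in>P. \<bar>\<nu> A\<bar>) \<le> M + M" if P: "P \<in> borel_partitions" for P
  proof -
    define Pp where "Pp = {A\<in>P. 0 \<le> \<nu> A}"
    define Pn where "Pn = {A\<in>P. \<nu> A < 0}"
    have fin: "finite P" and sub: "Pp \<subseteq> P" "Pn \<subseteq> P" "P \<subseteq> sets borel" and "disjoint P"
      using P by (auto simp: borel_partitions_def Pp_def Pn_def)
    then have unions: "(\<Sum>A\<in>Pp. \<nu> A) = \<nu> (\<Union>Pp)" "(\<Sum>A\<in>Pn. \<nu> A) = \<nu> (\<Union>Pn)"
      using signed_measure_finite_Union[OF sm, of Pp] signed_measure_finite_Union[OF sm, of Pn]
      by (auto intro: pairwise_subset dest: finite_subset)
    have "(\<Sum>A\<in>P. \<bar>\<nu> A\<bar>) = (\<Sum>A\<in>Pp. \<nu> A) - (\<Sum>A\<in>Pn. \<nu> A)"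
    proof -
      have "(\<Sum>A\<in>P. \<bar>\<nu> A\<bar>) = (\<Sum>A\<in>Pp. \<bar>\<nu> A\<bar>) + (\<Sum>A\<in>Pn. \<bar>\<nu> A\<bar>)"
        using fin by (subst sum.union_disjoint[symmetric]) (auto simp: Pp_def Pn_def intro: sum.cong)
      also have "\<dots> = (\<Sum>A\<in>Pp. \<nu> A) - (\<Sum>A\<in>Pn. \<nu> A)"
        by (simp add: Pp_def Pn_def sum_negf[symmetric])
      finally show ?thesis .
    qed
    also have "\<dots> \<le> M + M" using unions M[of "\<Union>Pp"] M[of "\<Union>Pn"] by linarith
    finally show ?thesis .
  qed
  then show ?thesis by (intro bdd_aboveI[of _ "M + M"]) auto
qed

lemma partition_sum_le_tv_norm:
  assumes "signed_measure \<nu>" "P \<in> borel_partitions"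
  shows "(\<Sum>A\<in>P. \<bar>\<nu> A\<bar>) \<le> tv_norm \<nu>"
  unfolding tv_norm_borel_partitions
  using cSUP_upper[OF assms(2) bdd_above_partition_sums[OF assms(1)]] .

lemma abs_UNIV_le_tv_norm: "signed_measure \<nu> \<Longrightarrow> \<bar>\<nu> UNIV\<bar> \<le> tv_norm \<nu>"
  using partition_sum_le_tv_norm[of \<nu> "{UNIV}"] by (simp add: borel_partitions_def)

lemma sum_singletons_le_tv_norm:
  fixes \<nu> :: "'a::t1_space set \<Rightarrow> real"
  assumes "signed_measure \<nu>" "finite F"
  shows "(\<Sum>x\<in>F. \<bar>\<nu> {x}\<bar>) \<le> tv_norm \<nu>"
proof -
  have "(\<lambda>x. {x}) ` F \<in> borel_partitions"
    using assms(2) by (auto simp: borel_partitions_def finite_in_borel pairwise_def disjnt_def)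
  from partition_sum_le_tv_norm[OF assms(1) this] show ?thesis
    by (simp add: sum.reindex)
qed

lemma tv_norm_cmult_positive_sm:
  fixes \<mu> :: "'a::topological_space set \<Rightarrow> real"
  assumes "positive_sm \<mu>"
  shows "tv_norm (\<lambda>A. c * \<mu> A) \<le> \<bar>c\<bar> * \<mu> UNIV"
  unfolding tv_norm_borel_partitions
proof (rule cSUP_least)
  show "borel_partitions \<noteq> {}" by (auto simp: borel_partitions_def)
  fix P :: "'a set set" assume "P \<in> borel_partitions"
  then have P: "finite P" "P \<subseteq> sets borel" "disjoint P" by (auto simp: borel_partitions_def)
  have sm: "signed_measure \<mu>" and nn: "\<And>A. 0 \<le> \<mu> A" using assms by (auto simp: positive_sm_def)
  have "(\<Sum>A\<in>P. \<bar>c * \<mu> A\<bar>) = \<bar>c\<bar> * \<mu> (\<Union>P)"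
    using signed_measure_finite_Union[OF sm P] by (simp add: abs_mult nn flip: sum_distrib_left)
  also have "\<dots> \<le> \<bar>c\<bar> * \<mu> UNIV" using positive_sm_le_UNIV[OF assms] by (simp add: mult_left_mono)
  finally show "(\<Sum>A\<in>P. \<bar>c * \<mu> A\<bar>) \<le> \<bar>c\<bar> * \<mu> UNIV" .
qed


lemma bdd_above_signed_measure_image:
  assumes "signed_measure \<nu>"
  shows "bdd_above (\<nu> ` X)"
proof -
  obtain M where "\<And>A. \<bar>\<nu> A\<bar> \<le> M" using signed_measure_bounded[OF assms] by blast
  then show ?thesis by (intro bdd_aboveI[of _ M]) (auto simp: abs_le_iff)
qed

lemma pos_var_upper:
  assumes "signed_measure \<nu>" "B \<in> sets borel" "B \<subseteq> A"
  shows "\<nu> B \<le> pos_var \<nu> A"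
  unfolding pos_var_def
  by (rule cSUP_upper[OF _ bdd_above_signed_measure_image[OF assms(1)]]) (use assms in auto)

lemma pos_var_least:
  assumes "\<And>B. B \<in> sets borel \<Longrightarrow> B \<subseteq> A \<Longrightarrow> \<nu> B \<le> c"
  shows "pos_var \<nu> A \<le> c"
  unfolding pos_var_def by (rule cSUP_least) (use assms in auto)

lemma pos_var_nonneg: "signed_measure \<nu> \<Longrightarrow> 0 \<le> pos_var \<nu> A"
  using pos_var_upper[of \<nu> "{}" A] signed_measure_empty[of \<nu>] by simp

lemma pos_var_empty: "signed_measure \<nu> \<Longrightarrow> pos_var \<nu> {} = 0"
  using pos_var_nonneg[of \<nu> "{}"] pos_var_least[of "{}" \<nu> 0] signed_measure_empty[of \<nu>] by auto

lemma pos_var_mono: "signed_measure \<nu> \<Longrightarrow> A \<subseteq> A' \<Longrightarrow> pos_var \<nu> A \<le> pos_var \<nu> A'"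
  by (rule pos_var_least) (auto intro: pos_var_upper)

lemma pos_var_Un:
  assumes sm: "signed_measure \<nu>" and AB: "A \<in> sets borel" "A' \<in> sets borel" "A \<inter> A' = {}"
  shows "pos_var \<nu> (A \<union> A') = pos_var \<nu> A + pos_var \<nu> A'"
proof (rule antisym)
  show "pos_var \<nu> (A \<union> A') \<le> pos_var \<nu> A + pos_var \<nu> A'"
  proof (rule pos_var_least)
    fix B assume B: "B \<in> sets borel" "B \<subseteq> A \<union> A'"
    have "\<nu> (B \<inter> A) \<le> pos_var \<nu> A" "\<nu> (B - A) \<le> pos_var \<nu> A'"
      using pos_var_upper[OF sm, of "B \<inter> A" A] pos_var_upper[OF sm, of "B - A" A'] B AB by auto
    then show "\<nu> B \<le> pos_var \<nu> A + pos_var \<nu> A'"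
      using signed_measure_Int_Diff[OF sm B(1) AB(1)] by linarith
  qed
next
  have "pos_var \<nu> A' \<le> pos_var \<nu> (A \<union> A') - pos_var \<nu> A"
  proof (rule pos_var_least)
    fix B' assume B': "B' \<in> sets borel" "B' \<subseteq> A'"
    have "pos_var \<nu> A \<le> pos_var \<nu> (A \<union> A') - \<nu> B'"
    proof (rule pos_var_least)
      fix B assume B: "B \<in> sets borel" "B \<subseteq> A"
      have "\<nu> (B \<union> B') = \<nu> B + \<nu> B'"
        using signed_measure_Un[OF sm B(1) B'(1)] B B' AB by auto
      moreover have "\<nu> (B \<union> B') \<le> pos_var \<nu> (A \<union> A')"
        using pos_var_upper[OF sm, of "B \<union> B'" "A \<union> A'"] B B' by auto
      ultimately show "\<nu> B \<le> pos_var \<nu> (A \<union> A') - \<nu> B'" by linarith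
    qed
    then show "\<nu> B' \<le> pos_var \<nu> (A \<union> A') - pos_var \<nu> A" by linarith
  qed
  then show "pos_var \<nu> A + pos_var \<nu> A' \<le> pos_var \<nu> (A \<union> A')" by linarith
qed

lemma pos_var_UN_lessThan:
  fixes F :: "nat \<Rightarrow> 'a::topological_space set"
  assumes sm: "signed_measure \<nu>" and F: "range F \<subseteq> sets borel" "disjoint_family F"
  shows "pos_var \<nu> (\<Union>i<n. F i) = (\<Sum>i<n. pos_var \<nu> (F i))"
proof (induction n)
  case 0
  show ?case using pos_var_empty[OF sm] by simp
next
  case (Suc n)
  have "F i \<inter> F n = {}" if "i < n" for i
    using F(2) that by (simp add: disjoint_family_on_def)
  then have "(\<Union>i<n. F i) \<inter> F n = {}" by auto
  moreover have "(\<Union>i<n. F i) \<in> sets borel" using F(1) by auto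
  ultimately show ?case
    using pos_var_Un[OF sm, of "\<Union>i<n. F i" "F n"] F(1) Suc by (auto simp: lessThan_Suc Un_commute)
qed

lemma pos_var_sums:
  assumes sm: "signed_measure \<nu>" and F: "range F \<subseteq> sets borel" "disjoint_family F"
  shows "(\<lambda>i. pos_var \<nu> (F i)) sums pos_var \<nu> (\<Union>i. F i)"
proof -
  let ?U = "\<Union>i. F i"
  have partial: "(\<Sum>i<n. pos_var \<nu> (F i)) \<le> pos_var \<nu> ?U" for n
    using pos_var_UN_lessThan[OF sm F, of n] pos_var_mono[OF sm, of "\<Union>i<n. F i" ?U] by auto
  have summ: "summable (\<lambda>i. pos_var \<nu> (F i))"
    by (rule summableI_nonneg_bounded[where x="pos_var \<nu> ?U"]) (use partial pos_var_nonneg[OF sm] in auto)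
  have "pos_var \<nu> ?U \<le> suminf (\<lambda>i. pos_var \<nu> (F i))"
  proof (rule pos_var_least)
    fix B assume B: "B \<in> sets borel" "B \<subseteq> ?U"
    have "range (\<lambda>i. B \<inter> F i) \<subseteq> sets borel" using B F by auto
    moreover have "disjoint_family (\<lambda>i. B \<inter> F i)"
      using F(2) by (auto simp: disjoint_family_on_def)
    moreover have "(\<Union>i. B \<inter> F i) = B" using B by auto
    ultimately have s: "(\<lambda>i. \<nu> (B \<inter> F i)) sums \<nu> B" using signed_measure_sums[OF sm] by metis
    then show "\<nu> B \<le> suminf (\<lambda>i. pos_var \<nu> (F i))"
      using sums_le[OF _ s summable_sums[OF summ]] pos_var_upper[OF sm] B F by auto
  qed
  then have "suminf (\<lambda>i. pos_var \<nu> (F i)) = pos_var \<nu> ?U"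
    using suminf_le_const[OF summ partial] by linarith
  then show ?thesis using summable_sums[OF summ] by simp
qed

lemma pos_var_jordan:
  assumes sm: "signed_measure \<nu>" and A: "A \<in> sets borel"
  shows "pos_var \<nu> A = \<nu> A + pos_var (\<lambda>A. - \<nu> A) A"
proof (rule antisym)
  have smn: "signed_measure (\<lambda>A. - \<nu> A)" by (rule signed_measure_uminus[OF sm])
  show "pos_var \<nu> A \<le> \<nu> A + pos_var (\<lambda>A. - \<nu> A) A"
  proof (rule pos_var_least)
    fix B assume B: "B \<in> sets borel" "B \<subseteq> A"
    have "- \<nu> (A - B) \<le> pos_var (\<lambda>A. - \<nu> A) A"
      using pos_var_upper[OF smn, of "A - B" A] A B by auto
    then show "\<nu> B \<le> \<nu> A + pos_var (\<lambda>A. - \<nu> A) A"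
      using signed_measure_Diff[OF sm B(1) A B(2)] by linarith
  qed
  have "pos_var (\<lambda>A. - \<nu> A) A \<le> pos_var \<nu> A - \<nu> A"
  proof (rule pos_var_least)
    fix B assume B: "B \<in> sets borel" "B \<subseteq> A"
    have "\<nu> (A - B) \<le> pos_var \<nu> A" using pos_var_upper[OF sm, of "A - B" A] A B by auto
    then show "- \<nu> B \<le> pos_var \<nu> A - \<nu> A"
      using signed_measure_Diff[OF sm B(1) A B(2)] by linarith
  qed
  then show "\<nu> A + pos_var (\<lambda>A. - \<nu> A) A \<le> pos_var \<nu> A" by linarith
qed

lemma sets_pos_meas: "sets (pos_meas \<nu>) = sets borel"
  unfolding pos_meas_def
  using sigma_algebra.sigma_sets_eq[OF sets.sigma_algebra_axioms[of borel]]
  by (simp add: sets_measure_of_conv)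

lemma space_pos_meas: "space (pos_meas \<nu>) = UNIV"
  unfolding pos_meas_def by (subst space_measure_of) auto

lemma emeasure_pos_meas:
  assumes sm: "signed_measure \<nu>" and A: "A \<in> sets borel"
  shows "emeasure (pos_meas \<nu>) A = ennreal (pos_var \<nu> A)"
  unfolding pos_meas_def
proof (rule emeasure_measure_of_sigma[OF _ _ _ A])
  show "sigma_algebra UNIV (sets (borel :: 'a measure))"
    using sets.sigma_algebra_axioms[of borel] by simp
  show "positive (sets borel) (\<lambda>A. ennreal (pos_var \<nu> A))"
    by (simp add: positive_def pos_var_empty[OF sm])
  show "countably_additive (sets borel) (\<lambda>A. ennreal (pos_var \<nu> A))"
    unfolding countably_additive_def
  proof (intro allI impI)
    fix F :: "nat \<Rightarrow> 'a set" assume F: "range F \<subseteq> sets borel" "disjoint_family F"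
    have s: "(\<lambda>i. pos_var \<nu> (F i)) sums pos_var \<nu> (\<Union>i. F i)" by (rule pos_var_sums[OF sm F])
    then have "(\<Sum>i. ennreal (pos_var \<nu> (F i))) = ennreal (\<Sum>i. pos_var \<nu> (F i))"
      by (intro suminf_ennreal2) (auto simp: pos_var_nonneg[OF sm] sums_summable)
    then show "(\<Sum>i. ennreal (pos_var \<nu> (F i))) = ennreal (pos_var \<nu> (\<Union>i. F i))"
      using s by (simp add: sums_unique[symmetric])
  qed
qed

lemma sm_integral_const:
  assumes sm: "signed_measure \<nu>"
  shows "sm_integral \<nu> (\<lambda>x. c) = c * \<nu> UNIV"
proof -
  have mass: "measure (pos_meas \<eta>) (space (pos_meas \<eta>)) = pos_var \<eta> UNIV"
    if "signed_measure \<eta>" for \<eta> :: "'a set \<Rightarrow> real"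
    using emeasure_pos_meas[OF that, of UNIV] pos_var_nonneg[OF that, of UNIV]
    by (simp add: measure_def space_pos_meas)
  show ?thesis
    using mass[OF sm] mass[OF signed_measure_uminus[OF sm]] pos_var_jordan[OF sm, of UNIV]
    by (simp add: sm_integral_def neg_meas_def algebra_simps)
qed


definition dirac_sm :: "'a::topological_space \<Rightarrow> 'a set \<Rightarrow> real" where
  "dirac_sm x = (\<lambda>A. if A \<in> sets borel then indicator A x else 0)"

lemma signed_measure_dirac_sm: "signed_measure (dirac_sm x)"
  unfolding signed_measure_def
proof (intro conjI allI impI)
  fix F :: "nat \<Rightarrow> 'a set" assume F: "range F \<subseteq> sets borel" "disjoint_family F"
  have U: "(\<Union>n. F n) \<in> sets borel" using F by auto
  show "(\<lambda>n. dirac_sm x (F n)) sums dirac_sm x (\<Union>n. F n)"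
  proof (cases "\<exists>i. x \<in> F i")
    case True
    then obtain i where i: "x \<in> F i" by blast
    have "x \<notin> F n" if "n \<noteq> i" for n using F(2) i that unfolding disjoint_family_on_def by blast
    then have "(\<lambda>n. dirac_sm x (F n)) = (\<lambda>n. if n = i then dirac_sm x (F n) else 0)"
      using F(1) by (auto simp: dirac_sm_def)
    moreover have "dirac_sm x (\<Union>n. F n) = dirac_sm x (F i)"
      using i U F(1) by (auto simp: dirac_sm_def indicator_def)
    ultimately show ?thesis using sums_single[of i "\<lambda>n. dirac_sm x (F n)"] by simp
  next
    case False
    then show ?thesis using U F(1) by (auto simp: dirac_sm_def)
  qed
qed (auto simp: dirac_sm_def)

lemma dirac_sm_singleton: "dirac_sm x {y::'a::t1_space} = (if y = x then 1 else 0)"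
  by (simp add: dirac_sm_def finite_in_borel)

lemma pos_var_dirac_sm: "pos_var (dirac_sm (x::'a::t1_space)) A = indicator A x"
proof (cases "x \<in> A")
  case True
  have "1 \<le> pos_var (dirac_sm x) A"
    using pos_var_upper[OF signed_measure_dirac_sm, of "{x}" A x] True
    by (simp add: finite_in_borel dirac_sm_singleton)
  moreover have "pos_var (dirac_sm x) A \<le> 1"
    by (rule pos_var_least) (auto simp: dirac_sm_def indicator_def)
  ultimately show ?thesis using True by simp
next
  case False
  have "pos_var (dirac_sm x) A \<le> 0"
    by (rule pos_var_least) (use False in \<open>auto simp: dirac_sm_def indicator_def\<close>)
  then show ?thesis using False pos_var_nonneg[OF signed_measure_dirac_sm, of x A] by simp
qed

lemma pos_var_uminus_dirac_sm: "pos_var (\<lambda>A. - dirac_sm x A) A = 0"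
proof -
  have "pos_var (\<lambda>A. - dirac_sm x A) A \<le> 0"
    by (rule pos_var_least) (auto simp: dirac_sm_def indicator_def)
  then show ?thesis
    using pos_var_nonneg[OF signed_measure_uminus[OF signed_measure_dirac_sm], of x A] by simp
qed

lemma sm_integral_dirac_sm:
  fixes f :: "'a::t1_space \<Rightarrow> real"
  assumes "f \<in> borel_measurable borel"
  shows "sm_integral (dirac_sm x) f = f x"
proof -
  have "pos_meas (dirac_sm x) = return borel x"
    by (rule measure_eqI)
       (auto simp: sets_pos_meas emeasure_pos_meas[OF signed_measure_dirac_sm] pos_var_dirac_sm indicator_def)
  moreover have "neg_meas (dirac_sm x) = null_measure borel"
    unfolding neg_meas_def
    by (rule measure_eqI)
       (auto simp: sets_pos_meas emeasure_pos_meas[OF signed_measure_uminus[OF signed_measure_dirac_sm]]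
         pos_var_uminus_dirac_sm)
  ultimately show ?thesis
    using integral_return[of x borel f] assms by (simp add: sm_integral_def)
qed

text \<open>The kernel of a weakly continuous operator is recovered from the images of the Dirac
  measures, \<open>k(x, A) = (T \<delta>\<^sub>x)(A)\<close>.\<close>

lemma weakly_continuous_vanishing_on_dirac_sm:
  fixes T :: "('a::t1_space set \<Rightarrow> real) \<Rightarrow> ('a set \<Rightarrow> real)"
  assumes "weakly_continuous T"
    and dirac: "\<And>x A. A \<in> sets borel \<Longrightarrow> T (dirac_sm x) A = 0"
    and "signed_measure \<nu>" "A \<in> sets borel"
  shows "T \<nu> A = 0"
proof -
  obtain k where k: "bounded_kernel k"
    and kT: "\<And>\<nu> A. signed_measure \<nu> \<Longrightarrow> A \<in> sets borel \<Longrightarrow> T \<nu> A = sm_integral \<nu> (\<lambda>x. k x A)"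
    using assms(1) unfolding weakly_continuous_def by blast
  have "(\<lambda>y. k y A) \<in> borel_measurable borel" using k assms(4) by (simp add: bounded_kernel_def)
  then have "k x A = T (dirac_sm x) A" for x
    using kT[OF signed_measure_dirac_sm assms(4)] sm_integral_dirac_sm by metis
  then have "(\<lambda>x. k x A) = (\<lambda>x. 0)" using dirac[OF assms(4)] by simp
  then show ?thesis using kT[OF assms(3,4)] sm_integral_const[OF assms(3), of 0] by simp
qed

definition diffuse_mass :: "('a::topological_space set \<Rightarrow> real) \<Rightarrow> real" where
  "diffuse_mass \<nu> = \<nu> UNIV - (\<Sum>\<^sub>\<infinity>x. \<nu> {x})"

lemma abs_summable_on_singletons:
  fixes \<nu> :: "'a::t1_space set \<Rightarrow> real"
  assumes "signed_measure \<nu>"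
  shows "(\<lambda>x. norm (\<nu> {x})) summable_on UNIV"
  by (rule nonneg_bdd_above_summable_on)
     (use sum_singletons_le_tv_norm[OF assms] in \<open>auto intro!: bdd_aboveI[of _ "tv_norm \<nu>"]\<close>)

lemma summable_on_singletons:
  fixes \<nu> :: "'a::t1_space set \<Rightarrow> real"
  assumes "signed_measure \<nu>"
  shows "(\<lambda>x. \<nu> {x}) summable_on UNIV"
  using abs_summable_on_singletons[OF assms] summable_on_iff_abs_summable_on_real by blast

lemma abs_diffuse_mass_le:
  fixes \<nu> :: "'a::t1_space set \<Rightarrow> real"
  assumes "signed_measure \<nu>"
  shows "\<bar>diffuse_mass \<nu>\<bar> \<le> 2 * tv_norm \<nu>"
proof -
  have "norm (\<Sum>\<^sub>\<infinity>x. \<nu> {x}) \<le> (\<Sum>\<^sub>\<infinity>x. norm (\<nu> {x}))"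
    by (rule norm_infsum_bound[OF abs_summable_on_singletons[OF assms]])
  also have "\<dots> \<le> tv_norm \<nu>"
    by (rule infsum_le_finite_sums[OF abs_summable_on_singletons[OF assms]])
       (use sum_singletons_le_tv_norm[OF assms] in auto)
  finally show ?thesis
    using abs_UNIV_le_tv_norm[OF assms] unfolding diffuse_mass_def by simp
qed

lemma diffuse_mass_lincomb:
  fixes \<nu> \<eta> :: "'a::t1_space set \<Rightarrow> real"
  assumes "signed_measure \<nu>" "signed_measure \<eta>"
  shows "diffuse_mass (\<lambda>A. a * \<nu> A + b * \<eta> A) = a * diffuse_mass \<nu> + b * diffuse_mass \<eta>"
proof -
  have "(\<Sum>\<^sub>\<infinity>x. a * \<nu> {x} + b * \<eta> {x}) = (\<Sum>\<^sub>\<infinity>x. a * \<nu> {x}) + (\<Sum>\<^sub>\<infinity>x. b * \<eta> {x})"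
    using summable_on_singletons[OF assms(1)] summable_on_singletons[OF assms(2)]
    by (intro infsum_add) (auto intro: summable_on_cmult_right)
  also have "\<dots> = a * (\<Sum>\<^sub>\<infinity>x. \<nu> {x}) + b * (\<Sum>\<^sub>\<infinity>x. \<eta> {x})"
    by (simp add: infsum_cmult_right')
  finally show ?thesis unfolding diffuse_mass_def by (simp add: algebra_simps)
qed

lemma diffuse_mass_positive_sm:
  fixes \<nu> :: "'a::t1_space set \<Rightarrow> real"
  assumes "positive_sm \<nu>"
  shows "0 \<le> diffuse_mass \<nu>" "diffuse_mass \<nu> \<le> \<nu> UNIV"
proof -
  have sm: "signed_measure \<nu>" and nn: "\<And>A. 0 \<le> \<nu> A" using assms by (auto simp: positive_sm_def)
  have "(\<Sum>\<^sub>\<infinity>x. \<nu> {x}) \<le> \<nu> UNIV"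
    by (rule infsum_le_finite_sums[OF summable_on_singletons[OF sm]])
       (use signed_measure_sum_singletons[OF sm] positive_sm_le_UNIV[OF assms] in auto)
  then show "0 \<le> diffuse_mass \<nu>" by (simp add: diffuse_mass_def)
  show "diffuse_mass \<nu> \<le> \<nu> UNIV" using infsum_nonneg[of UNIV "\<lambda>x. \<nu> {x}"] nn by (simp add: diffuse_mass_def)
qed

lemma diffuse_mass_dirac_sm: "diffuse_mass (dirac_sm (x::'a::t1_space)) = 0"
proof -
  have "(\<Sum>\<^sub>\<infinity>y. dirac_sm x {y}) = (\<Sum>\<^sub>\<infinity>y\<in>{x}. dirac_sm x {y})"
    by (rule infsum_cong_neutral) (auto simp: dirac_sm_singleton)
  then show ?thesis by (simp add: diffuse_mass_def dirac_sm_singleton dirac_sm_def)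
qed

lemma atomless_sm_singleton:
  fixes m :: "'a::t1_space set \<Rightarrow> real"
  assumes "positive_sm m" "atomless_sm m"
  shows "m {x} = 0"
proof (rule ccontr)
  assume "m {x} \<noteq> 0"
  then have "m {x} > 0" using assms(1) by (simp add: positive_sm_def order_less_le)
  moreover have "\<forall>B \<in> sets borel. B \<subseteq> {x} \<longrightarrow> m B = 0 \<or> m B = m {x}"
    using assms(1) by (auto simp: subset_singleton_iff positive_sm_def signed_measure_empty)
  ultimately show False using assms(2) finite_in_borel[of "{x}"] unfolding atomless_sm_def by auto
qed

lemma diffuse_mass_atomless_sm:
  fixes m :: "'a::t1_space set \<Rightarrow> real"
  assumes "positive_sm m" "atomless_sm m"
  shows "diffuse_mass m = m UNIV"
  using atomless_sm_singleton[OF assms] by (simp add: diffuse_mass_def)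

lemma bounded_op_rank_one:
  fixes \<mu> :: "'a::topological_space set \<Rightarrow> real" and f :: "('a set \<Rightarrow> real) \<Rightarrow> real"
  assumes \<mu>: "positive_sm \<mu>"
    and lin: "\<And>\<nu> \<eta> a b. signed_measure \<nu> \<Longrightarrow> signed_measure \<eta> \<Longrightarrow>
                f (\<lambda>A. a * \<nu> A + b * \<eta> A) = a * f \<nu> + b * f \<eta>"
    and bound: "\<And>\<nu>. signed_measure \<nu> \<Longrightarrow> \<bar>f \<nu>\<bar> \<le> C * tv_norm \<nu>"
  shows "bounded_op (\<lambda>\<nu> A. f \<nu> * \<mu> A)"
  unfolding bounded_op_def
proof (intro conjI allI impI exI)
  have sm: "signed_measure \<mu>" and U: "0 \<le> \<mu> UNIV" using \<mu> by (auto simp: positive_sm_def)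
  show "signed_measure (\<lambda>A. f \<nu> * \<mu> A)" for \<nu> by (rule signed_measure_cmult[OF sm])
  show "(\<lambda>A. f (\<lambda>A. a * \<nu> A + b * \<eta> A) * \<mu> A) = (\<lambda>A. a * (f \<nu> * \<mu> A) + b * (f \<eta> * \<mu> A))"
    if "signed_measure \<nu>" "signed_measure \<eta>" for \<nu> \<eta> a b
    using lin[OF that] by (simp add: algebra_simps)
  show "tv_norm (\<lambda>A. f \<nu> * \<mu> A) \<le> (C * \<mu> UNIV) * tv_norm \<nu>" if "signed_measure \<nu>" for \<nu>
  proof -
    have "tv_norm (\<lambda>A. f \<nu> * \<mu> A) \<le> \<bar>f \<nu>\<bar> * \<mu> UNIV" by (rule tv_norm_cmult_positive_sm[OF \<mu>])
    also have "\<dots> \<le> (C * tv_norm \<nu>) * \<mu> UNIV" by (rule mult_right_mono[OF bound[OF that] U])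
    finally show ?thesis by (simp add: algebra_simps)
  qed
qed

lemma weakly_continuous_one_tensor:
  fixes \<mu> :: "'a::topological_space set \<Rightarrow> real"
  assumes "positive_sm \<mu>"
  shows "weakly_continuous (one_tensor \<mu>)"
  unfolding weakly_continuous_def
proof (intro conjI exI allI impI ballI)
  have "bounded_op (\<lambda>\<nu> A. \<nu> UNIV * \<mu> A)"
    using assms abs_UNIV_le_tv_norm by (intro bounded_op_rank_one[where C = 1]) auto
  then show "bounded_op (one_tensor \<mu>)" by (simp add: one_tensor_def[abs_def])
  show "bounded_kernel (\<lambda>x. \<mu>)" using assms by (auto simp: bounded_kernel_def positive_sm_def)
  show "one_tensor \<mu> \<nu> A = sm_integral \<nu> (\<lambda>x. \<mu> A)" if "signed_measure \<nu>" for \<nu> A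
    using that by (simp add: sm_integral_const one_tensor_def mult.commute)
qed

theorem mainTheorem6:
  fixes m :: "'a::polish_space set \<Rightarrow> real"
  assumes "positive_sm m" and "m \<noteq> (\<lambda>_. 0)" and "atomless_sm m"
  shows "\<forall>\<mu>::'a set \<Rightarrow> real. positive_sm \<mu> \<and> \<mu> \<noteq> (\<lambda>_. 0) \<longrightarrow>
           weakly_continuous (one_tensor \<mu>) \<and>
           (\<exists>T. bounded_op T \<and> op_le (\<lambda>_ _. 0) T \<and> op_le T (one_tensor \<mu>) \<and>
                 \<not> weakly_continuous T)"
proof (intro allI impI conjI)
  fix \<mu> :: "'a set \<Rightarrow> real"
  assume "positive_sm \<mu> \<and> \<mu> \<noteq> (\<lambda>_. 0)"
  then have \<mu>: "positive_sm \<mu>" and "\<mu> \<noteq> (\<lambda>_. 0)" by auto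
  then obtain A where A: "\<mu> A \<noteq> 0" "A \<in> sets borel"
    by (metis positive_sm_def signed_measure_nonborel)
  show "weakly_continuous (one_tensor \<mu>)" by (rule weakly_continuous_one_tensor[OF \<mu>])
  define T where "T = (\<lambda>\<nu> :: 'a set \<Rightarrow> real. \<lambda>A. diffuse_mass \<nu> * \<mu> A)"
  have "bounded_op T"
    unfolding T_def using \<mu> diffuse_mass_lincomb abs_diffuse_mass_le
    by (intro bounded_op_rank_one[where C = 2])
  moreover have "op_le (\<lambda>_ _. 0) T" "op_le T (one_tensor \<mu>)"
    using diffuse_mass_positive_sm \<mu> unfolding op_le_def T_def one_tensor_def positive_sm_def
    by (auto intro: mult_nonneg_nonneg mult_right_mono)
  moreover have "\<not> weakly_continuous T"
  proof
    assume "weakly_continuous T"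
    moreover have "T (dirac_sm x) B = 0" for x B by (simp add: T_def diffuse_mass_dirac_sm)
    ultimately have "T m A = 0"
      using weakly_continuous_vanishing_on_dirac_sm assms(1) A(2) by (metis positive_sm_def)
    then have "m UNIV = 0" using A(1) by (simp add: T_def diffuse_mass_atomless_sm[OF assms(1,3)])
    then show False
      using assms(1,2) positive_sm_le_UNIV by (metis positive_sm_def order_antisym ext)
  qed
  ultimately show "\<exists>T. bounded_op T \<and> op_le (\<lambda>_ _. 0) T \<and> op_le T (one_tensor \<mu>) \<and> \<not> weakly_continuous T"
    by blast
qed

end
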